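(* Let $G$ be a locally compact group, $\omega$ a weight on $G$, $1\le p<\infty$, and assume $L^p(G,\omega)$ is a Banach algebra under convolution. If for some positive number $\gamma$ and some $x\in G$ the operator $\gamma\,l_x$ on $L^p(G,\omega)$ is both a left multiplier of $L^p(G,\omega)$ and an algebra isomorphism, then $\gamma=1$ and $x=e_G$.
   Context: A weight on $G$ is a positive continuous function $\omega:G\to\mathbb{R}^+$ with $\omega(xy)\le\omega(x)\omega(y)$ for all $x,y\in G$ and $\omega(e_G)=1$. $L^p(G,\omega)$ is the space of measurable $f:G\to\mathbb{C}$ with $\|f\|_{p,\omega}:=\left(\int_G|f(x)|^p\omega(x)^p\,dx\right)^{1/p}<\infty$, with convolution product. The left translation is $l_xf(y)=f(x^{-1}y)$. A linear operator $L$ on $L^p(G,\omega)$ is a left multiplier if $L(f*g)=L(f)*g$ for all $f,g\in L^p(G,\omega)$. *)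

theory Defs
  imports "HOL-Analysis.Analysis" "HOL-Algebra.Group"
begin

definition lc_group :: "('a::t2_space, 'b) monoid_scheme \<Rightarrow> bool" where
  "lc_group G \<longleftrightarrow> group G \<and> carrier G = UNIV
     \<and> continuous_on UNIV (\<lambda>z::'a \<times> 'a. fst z \<otimes>\<^bsub>G\<^esub> snd z)
     \<and> continuous_on UNIV (\<lambda>x. inv\<^bsub>G\<^esub> x)
     \<and> (\<forall>x::'a. \<exists>K. compact K \<and> x \<in> interior K)"

definition haar_measure :: "('a::t2_space, 'b) monoid_scheme \<Rightarrow> 'a measure \<Rightarrow> bool" where
  "haar_measure G \<mu> \<longleftrightarrow> sets \<mu> = sets borel
     \<and> (\<forall>x A. A \<in> sets borel \<longrightarrow> emeasure \<mu> ((\<lambda>y. x \<otimes>\<^bsub>G\<^esub> y) ` A) = emeasure \<mu> A)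
     \<and> (\<forall>K. compact K \<longrightarrow> emeasure \<mu> K < \<infinity>)
     \<and> (\<forall>U. open U \<longrightarrow> U \<noteq> {} \<longrightarrow> emeasure \<mu> U > 0)
     \<and> (\<forall>A \<in> sets borel. emeasure \<mu> A = (INF U\<in>{U. open U \<and> A \<subseteq> U}. emeasure \<mu> U))
     \<and> (\<forall>U. open U \<longrightarrow> emeasure \<mu> U = (SUP K\<in>{K. compact K \<and> K \<subseteq> U}. emeasure \<mu> K))"

definition weight :: "('a::topological_space, 'b) monoid_scheme \<Rightarrow> ('a \<Rightarrow> real) \<Rightarrow> bool" where
  "weight G \<omega> \<longleftrightarrow> continuous_on UNIV \<omega> \<and> (\<forall>x. \<omega> x > 0)
     \<and> (\<forall>x y. \<omega> (x \<otimes>\<^bsub>G\<^esub> y) \<le> \<omega> x * \<omega> y) \<and> \<omega> \<one>\<^bsub>G\<^esub> = 1"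

text \<open>Elements of the weighted space L^p(G,\<omega>) (representatives; equality is a.e.).\<close>
definition Lpw :: "'a measure \<Rightarrow> real \<Rightarrow> ('a \<Rightarrow> real) \<Rightarrow> ('a \<Rightarrow> complex) set" where
  "Lpw \<mu> p \<omega> = {f. f \<in> borel_measurable \<mu> \<and>
      (\<integral>\<^sup>+ x. ennreal ((norm (f x) * \<omega> x) powr p) \<partial>\<mu>) < \<infinity>}"

definition Lpw_norm :: "'a measure \<Rightarrow> real \<Rightarrow> ('a \<Rightarrow> real) \<Rightarrow> ('a \<Rightarrow> complex) \<Rightarrow> real" where
  "Lpw_norm \<mu> p \<omega> f = (\<integral>x. (norm (f x) * \<omega> x) powr p \<partial>\<mu>) powr (1 / p)"

definition conv :: "('a, 'b) monoid_scheme \<Rightarrow> 'a measure \<Rightarrow> ('a \<Rightarrow> complex) \<Rightarrow> ('a \<Rightarrow> complex) \<Rightarrow> 'a \<Rightarrow> complex" where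
  "conv G \<mu> f g = (\<lambda>y. \<integral>z. f z * g (inv\<^bsub>G\<^esub> z \<otimes>\<^bsub>G\<^esub> y) \<partial>\<mu>)"

definition ltrans :: "('a, 'b) monoid_scheme \<Rightarrow> 'a \<Rightarrow> ('a \<Rightarrow> complex) \<Rightarrow> 'a \<Rightarrow> complex" where
  "ltrans G x f = (\<lambda>y. f (inv\<^bsub>G\<^esub> x \<otimes>\<^bsub>G\<^esub> y))"

definition Lpw_banach_algebra :: "('a, 'b) monoid_scheme \<Rightarrow> 'a measure \<Rightarrow> real \<Rightarrow> ('a \<Rightarrow> real) \<Rightarrow> bool" where
  "Lpw_banach_algebra G \<mu> p \<omega> \<longleftrightarrow> (\<forall>f\<in>Lpw \<mu> p \<omega>. \<forall>g\<in>Lpw \<mu> p \<omega>.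
      conv G \<mu> f g \<in> Lpw \<mu> p \<omega> \<and>
      Lpw_norm \<mu> p \<omega> (conv G \<mu> f g) \<le> Lpw_norm \<mu> p \<omega> f * Lpw_norm \<mu> p \<omega> g)"

text \<open>Operators on L^p(G,\<omega>), acting on representatives; identities hold a.e.\<close>
definition is_Lpw_operator :: "'a measure \<Rightarrow> real \<Rightarrow> ('a \<Rightarrow> real) \<Rightarrow> (('a \<Rightarrow> complex) \<Rightarrow> ('a \<Rightarrow> complex)) \<Rightarrow> bool" where
  "is_Lpw_operator \<mu> p \<omega> L \<longleftrightarrow>
     (\<forall>f\<in>Lpw \<mu> p \<omega>. L f \<in> Lpw \<mu> p \<omega>)
   \<and> (\<forall>f\<in>Lpw \<mu> p \<omega>. \<forall>g\<in>Lpw \<mu> p \<omega>. (AE y in \<mu>. f y = g y) \<longrightarrow> (AE y in \<mu>. L f y = L g y))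
   \<and> (\<forall>f\<in>Lpw \<mu> p \<omega>. \<forall>g\<in>Lpw \<mu> p \<omega>. \<forall>a b::complex.
        AE y in \<mu>. L (\<lambda>t. a * f t + b * g t) y = a * L f y + b * L g y)"

definition left_multiplier :: "('a, 'b) monoid_scheme \<Rightarrow> 'a measure \<Rightarrow> real \<Rightarrow> ('a \<Rightarrow> real) \<Rightarrow> (('a \<Rightarrow> complex) \<Rightarrow> ('a \<Rightarrow> complex)) \<Rightarrow> bool" where
  "left_multiplier G \<mu> p \<omega> L \<longleftrightarrow> is_Lpw_operator \<mu> p \<omega> L \<and>
     (\<forall>f\<in>Lpw \<mu> p \<omega>. \<forall>g\<in>Lpw \<mu> p \<omega>.
        AE y in \<mu>. L (conv G \<mu> f g) y = conv G \<mu> (L f) g y)"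

definition algebra_iso :: "('a, 'b) monoid_scheme \<Rightarrow> 'a measure \<Rightarrow> real \<Rightarrow> ('a \<Rightarrow> real) \<Rightarrow> (('a \<Rightarrow> complex) \<Rightarrow> ('a \<Rightarrow> complex)) \<Rightarrow> bool" where
  "algebra_iso G \<mu> p \<omega> L \<longleftrightarrow> is_Lpw_operator \<mu> p \<omega> L
   \<and> (\<forall>f\<in>Lpw \<mu> p \<omega>. \<forall>g\<in>Lpw \<mu> p \<omega>.
        AE y in \<mu>. L (conv G \<mu> f g) y = conv G \<mu> (L f) (L g) y)
   \<and> (\<forall>f\<in>Lpw \<mu> p \<omega>. \<forall>g\<in>Lpw \<mu> p \<omega>. (AE y in \<mu>. L f y = L g y) \<longrightarrow> (AE y in \<mu>. f y = g y))
   \<and> (\<forall>g\<in>Lpw \<mu> p \<omega>. \<exists>f\<in>Lpw \<mu> p \<omega>. AE y in \<mu>. L f y = g y)"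

end

theory Submission
  imports Defs
begin

text \<open>Test it on indicators of small open
  sets: at \<open>y = x w\<close>, \<open>\<gamma> l\<^sub>x (\<chi>\<^sub>A * \<chi>\<^sub>V)\<close> is \<open>\<gamma>\<close> times the Haar measure of \<open>A \<inter> w V\<^sup>-\<^sup>1\<close>, while
  \<open>\<gamma> l\<^sub>x \<chi>\<^sub>A * \<gamma> l\<^sub>x \<chi>\<^sub>V\<close> is \<open>\<gamma>\<^sup>2\<close> times the measure of an open set which contains \<open>y x\<^sup>-\<^sup>1\<close>
  as soon as \<open>w x\<^sup>-\<^sup>1 \<in> A\<close>. If \<open>x \<noteq> e\<close>, choosing \<open>A\<close> near \<open>e\<close> and \<open>V\<close> small makes the first set
  empty and the second one nonempty, a contradiction. For \<open>x = e\<close> both sets coincide and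
  have positive finite measure, so \<open>\<gamma> = \<gamma>\<^sup>2\<close>.\<close>

lemma indicator_in_Lpw:
  fixes A K :: "'a::topological_space set"
  assumes "A \<in> sets \<mu>" "K \<in> sets \<mu>" "A \<subseteq> K" "compact K" "emeasure \<mu> K < \<infinity>"
    and "continuous_on K \<omega>" "\<And>x. x \<in> K \<Longrightarrow> 0 \<le> \<omega> x" "0 \<le> p"
  shows "(indicator A :: 'a \<Rightarrow> complex) \<in> Lpw \<mu> p \<omega>"
proof -
  have "bdd_above (\<omega> ` K)"
    using assms(4,6) by (intro bounded_imp_bdd_above compact_imp_bounded compact_continuous_image)
  then obtain M where M: "\<And>z. z \<in> K \<Longrightarrow> \<omega> z \<le> M"
    by (auto simp: bdd_above_def)
  have "(\<integral>\<^sup>+ x. ennreal ((norm (indicator A x :: complex) * \<omega> x) powr p) \<partial>\<mu>)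
        \<le> (\<integral>\<^sup>+ x. ennreal (M powr p) * indicator K x \<partial>\<mu>)"
  proof (rule nn_integral_mono)
    fix x
    show "ennreal ((norm (indicator A x :: complex) * \<omega> x) powr p)
        \<le> ennreal (M powr p) * indicator K x"
    proof (cases "x \<in> A")
      case True
      with assms(3) have "x \<in> K" by auto
      then have "\<omega> x powr p \<le> M powr p"
        using M assms(7,8) by (intro powr_mono2) auto
      with True \<open>x \<in> K\<close> show ?thesis by (simp add: ennreal_leI)
    qed simp
  qed
  also have "\<dots> = ennreal (M powr p) * emeasure \<mu> K"
    using assms(2) by (rule nn_integral_cmult_indicator)
  also have "\<dots> < \<infinity>"
    using assms(5) by (simp add: ennreal_mult_less_top)
  finally show ?thesis
    using assms(1) unfolding Lpw_def by simp
qed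

lemma ltrans_indicator:
  "ltrans G x (indicator A) = indicator {z. inv\<^bsub>G\<^esub> x \<otimes>\<^bsub>G\<^esub> z \<in> A}"
  by (simp add: ltrans_def indicator_def fun_eq_iff)

lemma conv_mult_const:
  "conv G \<mu> (\<lambda>y. c * f y) (\<lambda>y. d * g y) w = c * d * conv G \<mu> f g w"
  unfolding conv_def by (simp add: ac_simps)

locale lc_haar =
  fixes G :: "('a::t2_space, 'b) monoid_scheme" (structure) and \<mu> :: "'a measure"
  assumes lc_group: "lc_group G" and haar: "haar_measure G \<mu>"

sublocale lc_haar \<subseteq> group G
  using lc_group unfolding lc_group_def by blast

context lc_haar
begin

lemma carrier_UNIV [simp]: "carrier G = UNIV"
  using lc_group unfolding lc_group_def by blast

lemma inv_mult_cancel_left [simp]: "inv a \<otimes> (a \<otimes> b) = b"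
  by (simp add: m_assoc[symmetric])

lemma mult_inv_cancel_left [simp]: "a \<otimes> (inv a \<otimes> b) = b"
  by (simp add: m_assoc[symmetric])

lemma continuous_on_group_mult:
  assumes "continuous_on S f" "continuous_on S g"
  shows "continuous_on S (\<lambda>t. f t \<otimes> g t)"
proof -
  have "continuous_on UNIV (\<lambda>z::'a \<times> 'a. fst z \<otimes> snd z)"
    using lc_group unfolding lc_group_def by blast
  from continuous_on_compose2[OF this continuous_on_Pair[OF assms]] show ?thesis
    by simp
qed

lemma continuous_on_group_inv:
  assumes "continuous_on S f"
  shows "continuous_on S (\<lambda>t. inv (f t))"
proof -
  have "continuous_on UNIV (\<lambda>x. inv x)"
    using lc_group unfolding lc_group_def by blast
  from continuous_on_compose2[OF this assms] show ?thesis
    by simp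
qed

lemma sets_haar: "sets \<mu> = sets borel"
  using haar by (simp add: haar_measure_def)

lemma space_haar [simp]: "space \<mu> = UNIV"
  using sets_eq_imp_space_eq[OF sets_haar] by simp

lemma emeasure_compact_finite: "compact K \<Longrightarrow> emeasure \<mu> K < \<infinity>"
  using haar unfolding haar_measure_def by (elim conjE) blast

lemma emeasure_open_pos: "open U \<Longrightarrow> U \<noteq> {} \<Longrightarrow> 0 < emeasure \<mu> U"
  using haar unfolding haar_measure_def by (elim conjE) blast

lemma measure_open_pos:
  assumes "open U" "U \<noteq> {}" "U \<subseteq> K" "compact K"
  shows "0 < measure \<mu> U"
proof -
  have "emeasure \<mu> U \<le> emeasure \<mu> K"
    using assms by (intro emeasure_mono) (auto simp: sets_haar compact_imp_closed)
  also have "\<dots> < \<infinity>"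
    using assms(4) by (rule emeasure_compact_finite)
  finally show ?thesis
    using emeasure_open_pos[OF assms(1,2)] by (simp add: measure_def enn2real_positive_iff)
qed

lemma AE_ex_in_open:
  assumes "AE y in \<mu>. P y" "open W" "W \<noteq> {}"
  shows "\<exists>y\<in>W. P y"
proof (rule ccontr)
  assume "\<not> (\<exists>y\<in>W. P y)"
  with assms(1) have "AE y in \<mu>. y \<notin> W"
    by (auto elim: eventually_mono)
  then have "emeasure \<mu> W = 0"
    using assms(2) by (subst (asm) AE_iff_measurable[of W]) (auto simp: sets_haar)
  with emeasure_open_pos[OF assms(2,3)] show False
    by simp
qed

lemma compact_neighbourhood_one:
  obtains U K where "open U" "compact K" "\<one> \<in> U" "U \<subseteq> K"
proof -
  have "\<exists>K. compact K \<and> \<one> \<in> interior K"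
    using lc_group unfolding lc_group_def by (elim conjE) blast
  then show ?thesis
    using that interior_subset open_interior by blast
qed

lemma open_mult_inv_neighbourhoods:
  assumes "open B" "x \<in> B"
  obtains Y V where "open Y" "open V" "x \<in> Y" "\<one> \<in> V"
    "\<And>w v. w \<in> Y \<Longrightarrow> v \<in> V \<Longrightarrow> w \<otimes> inv v \<in> B"
proof -
  let ?P = "(\<lambda>q. fst q \<otimes> inv (snd q)) -` B"
  have "continuous_on UNIV (\<lambda>q::'a \<times> 'a. fst q \<otimes> inv (snd q))"
    by (intro continuous_on_group_mult continuous_on_group_inv continuous_on_fst
        continuous_on_snd continuous_on_id)
  then have "open ?P"
    using assms(1) by (simp add: open_vimage)
  moreover have "(x, \<one>) \<in> ?P"
    using assms(2) by simp
  ultimately obtain Y V where YV: "open Y" "open V" "(x, \<one>) \<in> Y \<times> V" "Y \<times> V \<subseteq> ?P"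
    by (rule open_prod_elim)
  have "w \<otimes> inv v \<in> B" if "w \<in> Y" "v \<in> V" for w v
    using YV(4) that by auto
  with YV(1-3) show ?thesis
    using that by simp
qed

lemma conv_indicator:
  "conv G \<mu> (indicator A) (indicator B) w = of_real (measure \<mu> {z \<in> A. inv z \<otimes> w \<in> B})"
proof -
  have "conv G \<mu> (indicator A) (indicator B) w
      = (\<integral>z. of_real (indicator {z \<in> A. inv z \<otimes> w \<in> B} z) \<partial>\<mu>)"
    unfolding conv_def by (rule Bochner_Integration.integral_cong) (auto simp: indicator_def)
  then show ?thesis
    by simp
qed

lemma algebra_iso_translation_measure_eq:
  assumes "weight G \<omega>" "0 \<le> p"
    and iso: "algebra_iso G \<mu> p \<omega> (\<lambda>f y. complex_of_real \<gamma> * ltrans G x f y)"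
    and "open A" "open V" "A \<subseteq> K" "V \<subseteq> K" "compact K" "open W" "W \<noteq> {}"
  obtains y where "y \<in> W"
    "\<gamma> * measure \<mu> {z \<in> A. inv z \<otimes> (inv x \<otimes> y) \<in> V}
       = \<gamma> * \<gamma> * measure \<mu> {z. inv x \<otimes> z \<in> A \<and> inv x \<otimes> (inv z \<otimes> y) \<in> V}"
proof -
  have "indicator U \<in> Lpw \<mu> p \<omega>" if "open U" "U \<subseteq> K" for U
  proof (rule indicator_in_Lpw)
    show "K \<in> sets \<mu>"
      using \<open>compact K\<close> by (simp add: sets_haar compact_imp_closed)
    show "continuous_on K \<omega>" "\<And>x. 0 \<le> \<omega> x"
      using assms(1) unfolding weight_def by (auto intro: continuous_on_subset less_imp_le)
  qed (use that assms emeasure_compact_finite in \<open>auto simp: sets_haar\<close>)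
  with iso assms(4-7) have "AE y in \<mu>.
      complex_of_real \<gamma> * ltrans G x (conv G \<mu> (indicator A) (indicator V)) y
      = conv G \<mu> (\<lambda>y. complex_of_real \<gamma> * ltrans G x (indicator A) y)
          (\<lambda>y. complex_of_real \<gamma> * ltrans G x (indicator V) y) y"
    unfolding algebra_iso_def by blast
  then have "AE y in \<mu>.
      complex_of_real (\<gamma> * measure \<mu> {z \<in> A. inv z \<otimes> (inv x \<otimes> y) \<in> V})
      = complex_of_real (\<gamma> * \<gamma> * measure \<mu> {z. inv x \<otimes> z \<in> A \<and> inv x \<otimes> (inv z \<otimes> y) \<in> V})"
    by (elim eventually_mono)
      (simp only: conv_mult_const ltrans_indicator, simp add: ltrans_def conv_indicator)
  then obtain y where "y \<in> W"
    "complex_of_real (\<gamma> * measure \<mu> {z \<in> A. inv z \<otimes> (inv x \<otimes> y) \<in> V})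
      = complex_of_real (\<gamma> * \<gamma> * measure \<mu> {z. inv x \<otimes> z \<in> A \<and> inv x \<otimes> (inv z \<otimes> y) \<in> V})"
    using AE_ex_in_open assms(9,10) by blast
  with that show ?thesis
    by (simp only: of_real_eq_iff)
qed

lemma algebra_iso_translation_trivial:
  assumes "weight G \<omega>" "0 \<le> p" "0 < \<gamma>"
    and iso: "algebra_iso G \<mu> p \<omega> (\<lambda>f y. complex_of_real \<gamma> * ltrans G x f y)"
  shows "x = \<one>"
proof (rule ccontr)
  assume "x \<noteq> \<one>"
  obtain U K where UK: "open U" "compact K" "\<one> \<in> U" "U \<subseteq> K"
    by (rule compact_neighbourhood_one)
  obtain A0 B where AB: "open A0" "open B" "\<one> \<in> A0" "x \<in> B" "A0 \<inter> B = {}"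
    using hausdorff[OF \<open>x \<noteq> \<one>\<close>[symmetric]] by blast
  obtain Y0 V0 where YV0: "open Y0" "open V0" "x \<in> Y0" "\<one> \<in> V0"
      "\<And>w v. w \<in> Y0 \<Longrightarrow> v \<in> V0 \<Longrightarrow> w \<otimes> inv v \<in> B"
    using open_mult_inv_neighbourhoods[OF AB(2,4)] by blast
  define A where "A = A0 \<inter> U"
  define V where "V = V0 \<inter> U"
  define Y where "Y = Y0 \<inter> (\<lambda>w. w \<otimes> inv x) -` A"
  have "open A" "open V" "A \<subseteq> K" "V \<subseteq> K"
    using AB UK YV0 by (auto simp: A_def V_def)
  have "open Y"
    unfolding Y_def using \<open>open A\<close> YV0(1)
    by (intro open_Int open_vimage continuous_on_group_mult continuous_intros) auto
  have "x \<otimes> x \<in> (\<lambda>y. inv x \<otimes> y) -` Y"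
    using AB UK YV0 by (simp add: Y_def A_def m_assoc[symmetric])
  moreover have "open ((\<lambda>y. inv x \<otimes> y) -` Y)"
    using \<open>open Y\<close> by (intro open_vimage continuous_on_group_mult continuous_intros)
  ultimately obtain y where y: "inv x \<otimes> y \<in> Y" and eq:
    "\<gamma> * measure \<mu> {z \<in> A. inv z \<otimes> (inv x \<otimes> y) \<in> V}
       = \<gamma> * \<gamma> * measure \<mu> {z. inv x \<otimes> z \<in> A \<and> inv x \<otimes> (inv z \<otimes> y) \<in> V}"
    using algebra_iso_translation_measure_eq[OF assms(1,2) iso \<open>open A\<close> \<open>open V\<close>
        \<open>A \<subseteq> K\<close> \<open>V \<subseteq> K\<close> UK(2)] by blast
  have empty: "{z \<in> A. inv z \<otimes> (inv x \<otimes> y) \<in> V} = {}"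
  proof safe
    fix z assume "z \<in> A" "inv z \<otimes> (inv x \<otimes> y) \<in> V"
    then have "(inv x \<otimes> y) \<otimes> inv (inv z \<otimes> (inv x \<otimes> y)) \<in> B"
      using y YV0(5) by (simp add: Y_def V_def)
    then have "z \<in> B"
      by (simp add: inv_mult_group m_assoc)
    with \<open>z \<in> A\<close> AB(5) show "z \<in> {}"
      by (auto simp: A_def)
  qed
  have pos: "0 < measure \<mu> {z. inv x \<otimes> z \<in> A \<and> inv x \<otimes> (inv z \<otimes> y) \<in> V}"
    (is "0 < measure \<mu> ?T")
  proof (rule measure_open_pos)
    show "open ?T"
      using \<open>open A\<close> \<open>open V\<close>
      by (simp only: Collect_conj_eq vimage_def[symmetric])
        (intro open_Int open_vimage continuous_on_group_mult continuous_on_group_inv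
          continuous_intros)
    have "y \<otimes> inv x \<in> ?T"
      using y YV0(4) UK(3) by (simp add: Y_def V_def inv_mult_group m_assoc)
    then show "?T \<noteq> {}"
      by blast
    show "?T \<subseteq> (\<lambda>u. x \<otimes> u) ` K"
      using \<open>A \<subseteq> K\<close> by (force intro: rev_image_eqI)
    show "compact ((\<lambda>u. x \<otimes> u) ` K)"
      using UK(2) by (intro compact_continuous_image continuous_on_group_mult continuous_intros)
  qed
  show False
    using eq[unfolded empty] pos \<open>0 < \<gamma>\<close> by simp
qed

lemma algebra_iso_scalar_one:
  assumes "weight G \<omega>" "0 \<le> p" "0 < \<gamma>"
    and iso: "algebra_iso G \<mu> p \<omega> (\<lambda>f y. complex_of_real \<gamma> * ltrans G \<one> f y)"
  shows "\<gamma> = 1"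
proof -
  obtain U K where UK: "open U" "compact K" "\<one> \<in> U" "U \<subseteq> K"
    by (rule compact_neighbourhood_one)
  then obtain y where "y \<in> U" and eq:
    "\<gamma> * measure \<mu> {z \<in> U. inv z \<otimes> (inv \<one> \<otimes> y) \<in> U}
       = \<gamma> * \<gamma> * measure \<mu> {z. inv \<one> \<otimes> z \<in> U \<and> inv \<one> \<otimes> (inv z \<otimes> y) \<in> U}"
    using algebra_iso_translation_measure_eq[OF assms(1,2) iso] by blast
  have "0 < measure \<mu> {z \<in> U. inv z \<otimes> y \<in> U}"
  proof (rule measure_open_pos)
    show "open {z \<in> U. inv z \<otimes> y \<in> U}"
      using UK(1) by (simp only: Collect_conj_eq vimage_def[symmetric] Collect_mem_eq)
        (intro open_Int open_vimage continuous_on_group_mult continuous_on_group_inv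
          continuous_intros)
  qed (use \<open>y \<in> U\<close> UK in auto)
  with eq \<open>0 < \<gamma>\<close> show ?thesis
    by simp
qed

end

theorem lemma1p4:
  fixes G :: "('a::t2_space, 'b) monoid_scheme" and \<mu> :: "'a measure"
    and \<omega> :: "'a \<Rightarrow> real" and p \<gamma> :: real and x :: 'a
  assumes "lc_group G" and "haar_measure G \<mu>" and "weight G \<omega>"
    and "1 \<le> p"
    and "Lpw_banach_algebra G \<mu> p \<omega>"
    and "\<gamma> > 0"
    and "left_multiplier G \<mu> p \<omega> (\<lambda>f y. complex_of_real \<gamma> * ltrans G x f y)"
    and "algebra_iso G \<mu> p \<omega> (\<lambda>f y. complex_of_real \<gamma> * ltrans G x f y)"
  shows "\<gamma> = 1 \<and> x = \<one>\<^bsub>G\<^esub>"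
proof -
  interpret lc_haar G \<mu>
    using assms(1,2) by unfold_locales
  have "0 \<le> p"
    using assms(4) by simp
  have "x = \<one>\<^bsub>G\<^esub>"
    by (rule algebra_iso_translation_trivial[OF assms(3) \<open>0 \<le> p\<close> assms(6,8)])
  moreover from this have "\<gamma> = 1"
    using algebra_iso_scalar_one[OF assms(3) \<open>0 \<le> p\<close> assms(6)] assms(8) by simp
  ultimately show ?thesis
    by simp
qed

end
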